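(* Let $N,n,m,p$ be positive integers, $B\in\mathbb{R}^{n\times p}$, $C\in\mathbb{R}^{m\times n}$, $H\in\mathbb{R}^{n\times m}$, $W=[w_{ij}]\in\mathbb{R}^{N\times N}$ with $w_{ii}=0$ for all $i$, $\Delta=\mathrm{diag}(\delta_1,\dots,\delta_N)$ with $\delta_i\in\{0,1\}$, and $h>0$. Put $\Phi_s=e^hI_{Nn}+(e^h-1)W\otimes HC$ and $\Psi_s=(e^h-1)(\Delta\otimes B)$. If the continuous-time system $\dot X(t)=(I_{Nn}+W\otimes HC)X(t)+(\Delta\otimes B)U(t)$ is controllable, then the discrete-time system $X(k+1)=\Phi_sX(k)+\Psi_sU(k)$ is controllable.
   Context: This is the networked system with self-loop node dynamics $A=I_n$ and its sampled-data version with sampling period $h$. The continuous-time system is controllable in the usual sense (equivalently $\mathrm{rank}[sI-\Phi,\ \Delta\otimes B]=Nn$ for all $s\in\mathbb{C}$, $\Phi=I_{Nn}+W\otimes HC$). The discrete-time system is called controllable if every initial state can be steered to the origin in finitely many steps. $\otimes$ is the Kronecker product. *)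

theory Defs
  imports "HOL-Analysis.Analysis" "Jordan_Normal_Form.Matrix"
begin

definition kron :: "real mat \<Rightarrow> real mat \<Rightarrow> real mat" where
  "kron A B = mat (dim_row A * dim_row B) (dim_col A * dim_col B)
     (\<lambda>(i,j). A $$ (i div dim_row B, j div dim_col B) * B $$ (i mod dim_row B, j mod dim_col B))"

definition ct_controllable :: "real mat \<Rightarrow> real mat \<Rightarrow> bool" where
  "ct_controllable A B \<longleftrightarrow>
     (\<forall>x0 x1. dim_vec x0 = dim_row A \<and> dim_vec x1 = dim_row A \<longrightarrow>
        (\<exists>T>0. \<exists>u x.
           (\<forall>t\<in>{0..T}. dim_vec (u t) = dim_col B \<and> dim_vec (x t) = dim_row A) \<and>
           (\<forall>j<dim_col B. continuous_on {0..T} (\<lambda>t. u t $ j)) \<and>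
           x 0 = x0 \<and> x T = x1 \<and>
           (\<forall>t\<in>{0..T}. \<forall>i<dim_row A.
              ((\<lambda>s. x s $ i) has_real_derivative ((A *\<^sub>v x t + B *\<^sub>v u t) $ i)) (at t within {0..T}))))"

fun dt_traj :: "real mat \<Rightarrow> real mat \<Rightarrow> real vec \<Rightarrow> (nat \<Rightarrow> real vec) \<Rightarrow> nat \<Rightarrow> real vec" where
  "dt_traj Phi Psi x0 u 0 = x0"
| "dt_traj Phi Psi x0 u (Suc k) = Phi *\<^sub>v dt_traj Phi Psi x0 u k + Psi *\<^sub>v u k"

definition dt_controllable :: "real mat \<Rightarrow> real mat \<Rightarrow> bool" where
  "dt_controllable Phi Psi \<longleftrightarrow>
     (\<forall>x0. dim_vec x0 = dim_row Phi \<longrightarrow>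
        (\<exists>k u. (\<forall>j<k. dim_vec (u j) = dim_col Psi) \<and>
               dt_traj Phi Psi x0 u k = 0\<^sub>v (dim_row Phi)))"

end

theory Submission
  imports Defs "Jordan_Normal_Form.Determinant"
begin

text \<open>With c = e^h - 1 > 0, A = I + W \<otimes> HC and D = \<Delta> \<otimes> B the sampled pair is
  (I + cA, cD).
  It suffices that no w \<noteq> 0 satisfies D^T ((I + cA)^T)^j w = 0 for j = 0, ..., Nn: the
  reachability Gramian is then invertible and yields an input steering any state to 0.
  For such a w and a trajectory X with X(0) = 0, the functions y_j(t) = ((I + cA)^T)^j w \<bullet> X(t)
  satisfy c y_j' = y_(j+1) - y_j, and a linear dependence among these Nn + 1 vectors closes
  this system; by Gronwall's inequality all y_j vanish. Steering X from 0 to w then gives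
  w \<bullet> w = y_0(T) = 0.\<close>

unbundle no inner_syntax

lemma scalar_prod_self_nonneg: "0 \<le> (v :: real vec) \<bullet> v"
  unfolding scalar_prod_def by (auto intro: sum_nonneg)

lemma scalar_prod_self_eq_zero:
  assumes "(v :: real vec) \<in> carrier_vec n" and "v \<bullet> v = 0"
  shows "v = 0\<^sub>v n"
proof -
  have "\<forall>i\<in>{0..<dim_vec v}. v $ i * v $ i = 0"
    using assms(2) unfolding scalar_prod_def by (subst sum_nonneg_eq_0_iff[symmetric]) auto
  then show ?thesis using assms(1) by (intro eq_vecI) auto
qed

lemma smult_mult_mat_vec:
  assumes "dim_vec v = dim_col A"
  shows "(c \<cdot>\<^sub>m (A :: 'a :: comm_semiring_1 mat)) *\<^sub>v v = c \<cdot>\<^sub>v (A *\<^sub>v v)"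
  using assms by (intro eq_vecI) (auto simp: scalar_prod_def sum_distrib_left mult.assoc)

lemma zero_mult_mat_vec [simp]: "v \<in> carrier_vec n \<Longrightarrow> 0\<^sub>m m n *\<^sub>v v = (0\<^sub>v m :: 'a :: semiring_0 vec)"
  by (intro eq_vecI) (auto simp: scalar_prod_def)

lemma transpose_smult_mat: "transpose_mat (c \<cdot>\<^sub>m A) = c \<cdot>\<^sub>m transpose_mat A"
  by (intro eq_matI) auto

lemma kron_carrier_mat: "kron A B \<in> carrier_mat (dim_row A * dim_row B) (dim_col A * dim_col B)"
  unfolding kron_def by simp

definition mat_pow_vec :: "'a :: semiring_1 mat \<Rightarrow> nat \<Rightarrow> 'a vec \<Rightarrow> 'a vec" where
  "mat_pow_vec M k = ((*\<^sub>v) M ^^ k)"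

lemma mat_pow_vec_0 [simp]: "mat_pow_vec M 0 v = v"
  by (simp add: mat_pow_vec_def)

lemma mat_pow_vec_Suc: "mat_pow_vec M (Suc k) v = M *\<^sub>v mat_pow_vec M k v"
  by (simp add: mat_pow_vec_def)

lemma mat_pow_vec_Suc_right: "mat_pow_vec M (Suc k) v = mat_pow_vec M k (M *\<^sub>v v)"
  by (simp add: mat_pow_vec_def funpow_Suc_right del: funpow.simps)

lemma mat_pow_vec_carrier [simp]:
  "M \<in> carrier_mat d d \<Longrightarrow> v \<in> carrier_vec d \<Longrightarrow> mat_pow_vec M k v \<in> carrier_vec d"
  by (induct k) (auto simp: mat_pow_vec_Suc)

text \<open>Taking d + 1 blocks rather
  than the d of Kalman's matrix makes the vectors (Phi^T)^j w, j \<le> d, linearly dependent without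
  appeal to Cayley-Hamilton.\<close>
definition ctrb_left_null :: "real mat \<Rightarrow> real mat \<Rightarrow> real vec \<Rightarrow> bool" where
  "ctrb_left_null Phi Psi w \<longleftrightarrow>
     (\<forall>j \<le> dim_row Phi. transpose_mat Psi *\<^sub>v mat_pow_vec (transpose_mat Phi) j w = 0\<^sub>v (dim_col Psi))"

lemma ctrb_left_null_smult:
  assumes Phi: "Phi \<in> carrier_mat d d" and Psi: "Psi \<in> carrier_mat d q"
    and w: "w \<in> carrier_vec d" and "c \<noteq> 0"
  shows "ctrb_left_null Phi (c \<cdot>\<^sub>m Psi) w \<longleftrightarrow> ctrb_left_null Phi Psi w"
proof -
  have "c \<cdot>\<^sub>v z = 0\<^sub>v q \<longleftrightarrow> z = 0\<^sub>v q" if "z \<in> carrier_vec q" for z :: "real vec"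
    using that \<open>c \<noteq> 0\<close> by (auto simp: vec_eq_iff)
  then show ?thesis
    using Phi Psi w unfolding ctrb_left_null_def transpose_smult_mat
    by (simp add: smult_mult_mat_vec)
qed

fun reach_gram :: "real mat \<Rightarrow> real mat \<Rightarrow> nat \<Rightarrow> real mat" where
  "reach_gram Phi Psi 0 = 0\<^sub>m (dim_row Phi) (dim_row Phi)"
| "reach_gram Phi Psi (Suc k) = Phi * reach_gram Phi Psi k * transpose_mat Phi + Psi * transpose_mat Psi"

lemma reach_gram_carrier [simp]:
  "Phi \<in> carrier_mat d d \<Longrightarrow> Psi \<in> carrier_mat d q \<Longrightarrow> reach_gram Phi Psi k \<in> carrier_mat d d"
  by (induct k) auto

lemma reach_gram_Suc_mult_vec:
  assumes Phi: "Phi \<in> carrier_mat d d" and Psi: "Psi \<in> carrier_mat d q" and z: "z \<in> carrier_vec d"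
  shows "reach_gram Phi Psi (Suc k) *\<^sub>v z =
    Phi *\<^sub>v (reach_gram Phi Psi k *\<^sub>v (transpose_mat Phi *\<^sub>v z)) + Psi *\<^sub>v (transpose_mat Psi *\<^sub>v z)"
proof -
  have G: "reach_gram Phi Psi k \<in> carrier_mat d d" using Phi Psi by simp
  have "reach_gram Phi Psi (Suc k) *\<^sub>v z =
      (Phi * reach_gram Phi Psi k * transpose_mat Phi) *\<^sub>v z + (Psi * transpose_mat Psi) *\<^sub>v z"
    unfolding reach_gram.simps by (rule add_mult_distrib_mat_vec[of _ d d]) (use Phi Psi G z in auto)
  also have "(Phi * reach_gram Phi Psi k * transpose_mat Phi) *\<^sub>v z =
      Phi *\<^sub>v (reach_gram Phi Psi k *\<^sub>v (transpose_mat Phi *\<^sub>v z))"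
    using Phi G z by (simp add: assoc_mult_mat_vec[of _ d d _ d])
  also have "(Psi * transpose_mat Psi) *\<^sub>v z = Psi *\<^sub>v (transpose_mat Psi *\<^sub>v z)"
    using Psi z by (simp add: assoc_mult_mat_vec)
  finally show ?thesis .
qed

definition gram_input :: "real mat \<Rightarrow> real mat \<Rightarrow> nat \<Rightarrow> real vec \<Rightarrow> nat \<Rightarrow> real vec" where
  "gram_input Phi Psi k z j = transpose_mat Psi *\<^sub>v mat_pow_vec (transpose_mat Phi) (k - 1 - j) z"

lemma gram_input_Suc:
  "j < k \<Longrightarrow> gram_input Phi Psi (Suc k) z j = gram_input Phi Psi k (transpose_mat Phi *\<^sub>v z) j"
  unfolding gram_input_def by (simp add: mat_pow_vec_Suc_right flip: Suc_diff_Suc)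

lemma dt_traj_cong:
  "(\<And>j. j < k \<Longrightarrow> u j = u' j) \<Longrightarrow> dt_traj Phi Psi x0 u k = dt_traj Phi Psi x0 u' k"
  by (induct k) auto

lemma dt_traj_gram_input:
  assumes Phi: "Phi \<in> carrier_mat d d" and Psi: "Psi \<in> carrier_mat d q"
    and x0: "x0 \<in> carrier_vec d" and z: "z \<in> carrier_vec d"
  shows "dt_traj Phi Psi x0 (gram_input Phi Psi k z) k = mat_pow_vec Phi k x0 + reach_gram Phi Psi k *\<^sub>v z"
  using z
proof (induct k arbitrary: z)
  case 0
  then show ?case using Phi x0 by simp
next
  case (Suc k)
  let ?G = "reach_gram Phi Psi k" and ?z = "transpose_mat Phi *\<^sub>v z"
  have z: "z \<in> carrier_vec d" and z': "?z \<in> carrier_vec d" using Phi Suc.prems by auto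
  have "dt_traj Phi Psi x0 (gram_input Phi Psi (Suc k) z) k = dt_traj Phi Psi x0 (gram_input Phi Psi k ?z) k"
    by (rule dt_traj_cong) (rule gram_input_Suc)
  also have "\<dots> = mat_pow_vec Phi k x0 + ?G *\<^sub>v ?z"
    using Suc.hyps z' .
  finally have "dt_traj Phi Psi x0 (gram_input Phi Psi (Suc k) z) (Suc k) =
      Phi *\<^sub>v (mat_pow_vec Phi k x0 + ?G *\<^sub>v ?z) + Psi *\<^sub>v (transpose_mat Psi *\<^sub>v z)"
    by (simp add: gram_input_def)
  also have "\<dots> = mat_pow_vec Phi (Suc k) x0 +
      (Phi *\<^sub>v (?G *\<^sub>v ?z) + Psi *\<^sub>v (transpose_mat Psi *\<^sub>v z))"
  proof -
    have "?G \<in> carrier_mat d d" using Phi Psi by simp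
    then have Gz: "?G *\<^sub>v ?z \<in> carrier_vec d" using z' by simp
    have "mat_pow_vec Phi k x0 \<in> carrier_vec d" using Phi x0 by simp
    moreover have "Phi *\<^sub>v (?G *\<^sub>v ?z) \<in> carrier_vec d" using Phi Gz by simp
    moreover have "Psi *\<^sub>v (transpose_mat Psi *\<^sub>v z) \<in> carrier_vec d" using Psi z by simp
    ultimately show ?thesis
      using Phi Gz by (simp add: mult_add_distrib_mat_vec[OF Phi] mat_pow_vec_Suc assoc_add_vec[of _ d])
  qed
  also have "\<dots> = mat_pow_vec Phi (Suc k) x0 + reach_gram Phi Psi (Suc k) *\<^sub>v z"
    using reach_gram_Suc_mult_vec[OF Phi Psi z] by simp
  finally show ?case .
qed

lemma reach_gram_Suc_quadratic_form:
  assumes Phi: "Phi \<in> carrier_mat d d" and Psi: "Psi \<in> carrier_mat d q" and w: "w \<in> carrier_vec d"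
  shows "w \<bullet> (reach_gram Phi Psi (Suc k) *\<^sub>v w) =
    (transpose_mat Phi *\<^sub>v w) \<bullet> (reach_gram Phi Psi k *\<^sub>v (transpose_mat Phi *\<^sub>v w))
    + (transpose_mat Psi *\<^sub>v w) \<bullet> (transpose_mat Psi *\<^sub>v w)"
proof -
  let ?G = "reach_gram Phi Psi k" and ?w = "transpose_mat Phi *\<^sub>v w"
  have G: "?G \<in> carrier_mat d d" using Phi Psi by simp
  have Gw: "?G *\<^sub>v ?w \<in> carrier_vec d" and Psiw: "transpose_mat Psi *\<^sub>v w \<in> carrier_vec q"
    using mult_mat_vec_carrier[OF G] Phi Psi w by simp_all
  then have "w \<bullet> (reach_gram Phi Psi (Suc k) *\<^sub>v w) =
      w \<bullet> (Phi *\<^sub>v (?G *\<^sub>v ?w)) + w \<bullet> (Psi *\<^sub>v (transpose_mat Psi *\<^sub>v w))"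
    unfolding reach_gram_Suc_mult_vec[OF Phi Psi w]
    by (intro scalar_prod_add_distrib[OF w] mult_mat_vec_carrier[OF Phi]
        mult_mat_vec_carrier[OF Psi])
  also have "\<dots> = ?w \<bullet> (?G *\<^sub>v ?w) + (transpose_mat Psi *\<^sub>v w) \<bullet> (transpose_mat Psi *\<^sub>v w)"
    using transpose_vec_mult_scalar[OF Phi Gw w] transpose_vec_mult_scalar[OF Psi Psiw w] by simp
  finally show ?thesis .
qed

lemma reach_gram_quadratic_form_nonneg:
  assumes "Phi \<in> carrier_mat d d" and "Psi \<in> carrier_mat d q" and "w \<in> carrier_vec d"
  shows "0 \<le> w \<bullet> (reach_gram Phi Psi k *\<^sub>v w)"
  using assms(3)
proof (induct k arbitrary: w)
  case 0
  then show ?case using assms(1) by simp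
next
  case (Suc k)
  have "transpose_mat Phi *\<^sub>v w \<in> carrier_vec d" using assms(1) Suc.prems by simp
  then show ?case
    unfolding reach_gram_Suc_quadratic_form[OF assms(1,2) Suc.prems]
    by (intro add_nonneg_nonneg Suc.hyps scalar_prod_self_nonneg)
qed

lemma reach_gram_quadratic_form_eq_zero:
  assumes Phi: "Phi \<in> carrier_mat d d" and Psi: "Psi \<in> carrier_mat d q"
    and "w \<in> carrier_vec d" and "w \<bullet> (reach_gram Phi Psi k *\<^sub>v w) = 0" and "j < k"
  shows "transpose_mat Psi *\<^sub>v mat_pow_vec (transpose_mat Phi) j w = 0\<^sub>v q"
  using assms(3-5)
proof (induct k arbitrary: w j)
  case 0
  then show ?case by simp
next
  case (Suc k)
  let ?w = "transpose_mat Phi *\<^sub>v w"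
  have w': "?w \<in> carrier_vec d" using Phi Suc.prems(1) by simp
  then have "0 \<le> ?w \<bullet> (reach_gram Phi Psi k *\<^sub>v ?w)"
    by (rule reach_gram_quadratic_form_nonneg[OF Phi Psi])
  then have G0: "?w \<bullet> (reach_gram Phi Psi k *\<^sub>v ?w) = 0"
    and Psi0: "(transpose_mat Psi *\<^sub>v w) \<bullet> (transpose_mat Psi *\<^sub>v w) = 0"
    using Suc.prems(2) scalar_prod_self_nonneg[of "transpose_mat Psi *\<^sub>v w"]
    unfolding reach_gram_Suc_quadratic_form[OF Phi Psi Suc.prems(1)] by linarith+
  show ?case
  proof (cases j)
    case 0
    then show ?thesis using scalar_prod_self_eq_zero[OF _ Psi0] Psi Suc.prems(1) by simp
  next
    case (Suc i)
    then show ?thesis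
      using Suc.hyps[OF w' G0, of i] \<open>j < Suc k\<close> by (simp add: mat_pow_vec_Suc_right)
  qed
qed

lemma det_nonzero_imp_right_inverse:
  assumes "A \<in> carrier_mat n n" and "det A \<noteq> (0 :: 'a :: field)"
  shows "\<exists>B \<in> carrier_mat n n. A * B = 1\<^sub>m n"
proof -
  have "A \<in> Units (ring_mat TYPE('a) n ())" by (rule det_non_zero_imp_unit[OF assms])
  then have "\<exists>B \<in> carrier_mat n n. B * A = 1\<^sub>m n \<and> A * B = 1\<^sub>m n"
    unfolding Units_def ring_mat_def by simp
  then show ?thesis by blast
qed

lemma det_reach_gram_nonzero:
  assumes Phi: "Phi \<in> carrier_mat d d" and Psi: "Psi \<in> carrier_mat d q"
    and trivial: "\<And>w. w \<in> carrier_vec d \<Longrightarrow> ctrb_left_null Phi Psi w \<Longrightarrow> w = 0\<^sub>v d"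
  shows "det (reach_gram Phi Psi (Suc d)) \<noteq> 0"
proof
  let ?G = "reach_gram Phi Psi (Suc d)"
  have G: "?G \<in> carrier_mat d d" using Phi Psi by simp
  assume "det ?G = 0"
  then obtain v where v: "v \<in> carrier_vec d" "v \<noteq> 0\<^sub>v d" "?G *\<^sub>v v = 0\<^sub>v d"
    using det_0_iff_vec_prod_zero[OF G] by auto
  then have "v \<bullet> (?G *\<^sub>v v) = 0" by simp
  from reach_gram_quadratic_form_eq_zero[OF Phi Psi v(1) this]
  have "ctrb_left_null Phi Psi v"
    using Phi Psi by (simp add: ctrb_left_null_def)
  then show False using trivial v by blast
qed

lemma dt_controllable_if_ctrb_left_null_trivial:
  assumes Phi: "Phi \<in> carrier_mat d d" and Psi: "Psi \<in> carrier_mat d q"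
    and "\<And>w. w \<in> carrier_vec d \<Longrightarrow> ctrb_left_null Phi Psi w \<Longrightarrow> w = 0\<^sub>v d"
  shows "dt_controllable Phi Psi"
  unfolding dt_controllable_def
proof (intro allI impI)
  fix x0 :: "real vec"
  assume "dim_vec x0 = dim_row Phi"
  then have x0: "x0 \<in> carrier_vec d" using Phi by (intro carrier_vecI) simp
  have "reach_gram Phi Psi (Suc d) \<in> carrier_mat d d" using Phi Psi by simp
  then obtain G' where G': "G' \<in> carrier_mat d d" "reach_gram Phi Psi (Suc d) * G' = 1\<^sub>m d"
    using det_nonzero_imp_right_inverse det_reach_gram_nonzero[OF Phi Psi assms(3)] by blast
  define z where "z = G' *\<^sub>v (- mat_pow_vec Phi (Suc d) x0)"
  have z: "z \<in> carrier_vec d" using G' Phi x0 by (simp add: z_def)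
  have "reach_gram Phi Psi (Suc d) *\<^sub>v z = - mat_pow_vec Phi (Suc d) x0"
    using G' Phi Psi x0 by (simp add: z_def assoc_mult_mat_vec[symmetric, of _ d d _ d])
  then have "dt_traj Phi Psi x0 (gram_input Phi Psi (Suc d) z) (Suc d) = 0\<^sub>v d"
    using dt_traj_gram_input[OF Phi Psi x0 z, of "Suc d"] Phi x0 by simp
  moreover have "dim_vec (gram_input Phi Psi (Suc d) z j) = dim_col Psi" for j
    unfolding gram_input_def by simp
  moreover have "dim_row Phi = d" using Phi by simp
  ultimately show "\<exists>k u. (\<forall>j<k. dim_vec (u j) = dim_col Psi) \<and>
      dt_traj Phi Psi x0 u k = 0\<^sub>v (dim_row Phi)"
    by metis
qed

lemma gronwall_vanishing:
  fixes g g' :: "real \<Rightarrow> real"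
  assumes deriv: "\<And>t. t \<in> {0..T} \<Longrightarrow> (g has_real_derivative g' t) (at t within {0..T})"
    and bound: "\<And>t. t \<in> {0..T} \<Longrightarrow> g' t \<le> L * g t"
    and nonneg: "\<And>t. t \<in> {0..T} \<Longrightarrow> 0 \<le> g t"
    and "g 0 = 0" and t: "t \<in> {0..T}"
  shows "g t = 0"
proof -
  define f where "f s = exp (- L * s) * g s" for s
  have df: "(f has_real_derivative exp (- L * s) * (g' s - L * g s)) (at s within {0..T})"
    if "s \<in> {0..T}" for s
    unfolding f_def using that by (auto intro!: derivative_eq_intros deriv simp: algebra_simps)
  have "f t \<le> f 0"
  proof (rule DERIV_nonpos_imp_decreasing_open[of 0 t f])
    show "0 \<le> t" using t by simp
    show "continuous_on {0..t} f"
      using DERIV_continuous_on[OF df] t by (auto intro: continuous_on_subset)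
  next
    fix s assume s: "0 < s" "s < t"
    then have "s \<in> {0..T}" "s < T" using t by auto
    then have "(f has_real_derivative exp (- L * s) * (g' s - L * g s)) (at s)"
      using df[of s] s at_within_Icc_at[of 0 s T] by auto
    moreover have "exp (- L * s) * (g' s - L * g s) \<le> 0"
      using bound[OF \<open>s \<in> {0..T}\<close>] by (simp add: mult_nonneg_nonpos)
    ultimately show "\<exists>y. (f has_real_derivative y) (at s) \<and> y \<le> 0" by blast
  qed
  then have "g t \<le> 0" using \<open>g 0 = 0\<close> by (simp add: f_def mult_le_0_iff)
  then show ?thesis using nonneg[OF t] by simp
qed

lemma sum_forward_diff_le_square:
  fixes y :: "nat \<Rightarrow> real"
  shows "(\<Sum>k<r. 2 * y k * (y (Suc k) - y k)) \<le> (y r)\<^sup>2"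
proof -
  have "(\<Sum>k<r. 2 * y k * (y (Suc k) - y k)) \<le> (\<Sum>k<r. (y (Suc k))\<^sup>2 - (y k)\<^sup>2)"
  proof (rule sum_mono)
    fix k
    have "0 \<le> (y (Suc k) - y k)\<^sup>2" by simp
    then show "2 * y k * (y (Suc k) - y k) \<le> (y (Suc k))\<^sup>2 - (y k)\<^sup>2"
      by (simp add: power2_eq_square algebra_simps)
  qed
  also have "\<dots> = (y r)\<^sup>2 - (y 0)\<^sup>2" by (rule sum_lessThan_telescope)
  also have "\<dots> \<le> (y r)\<^sup>2" by simp
  finally show ?thesis .
qed

lemma shift_ode_vanishes:
  fixes y :: "nat \<Rightarrow> real \<Rightarrow> real"
  assumes c: "c > 0"
    and deriv: "\<And>k t. k < r \<Longrightarrow> t \<in> {0..T} \<Longrightarrow>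
      (y k has_real_derivative (y (Suc k) t - y k t) / c) (at t within {0..T})"
    and closed: "\<And>t. t \<in> {0..T} \<Longrightarrow> y r t = (\<Sum>k<r. b k * y k t)"
    and init: "\<And>k. k < r \<Longrightarrow> y k 0 = 0"
    and t: "t \<in> {0..T}"
  shows "y 0 t = 0"
proof -
  define g where "g s = (\<Sum>k<r. (y k s)\<^sup>2)" for s
  define g' where "g' s = (\<Sum>k<r. 2 * y k s * (y (Suc k) s - y k s)) / c" for s
  have g_deriv: "(g has_real_derivative g' s) (at s within {0..T})" if "s \<in> {0..T}" for s
    unfolding g_def[abs_def] g'_def sum_divide_distrib
  proof (rule DERIV_sum)
    fix k assume "k \<in> {..<r}"
    then have "(y k has_real_derivative (y (Suc k) s - y k s) / c) (at s within {0..T})"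
      using deriv that by simp
    from DERIV_mult[OF this this]
    show "((\<lambda>s. (y k s)\<^sup>2) has_real_derivative 2 * y k s * (y (Suc k) s - y k s) / c) (at s within {0..T})"
      by (simp add: power2_eq_square algebra_simps)
  qed
  have g_bound: "g' s \<le> ((\<Sum>k<r. (b k)\<^sup>2) / c) * g s" if "s \<in> {0..T}" for s
  proof -
    have "(\<Sum>k<r. 2 * y k s * (y (Suc k) s - y k s)) \<le> (y r s)\<^sup>2"
      by (rule sum_forward_diff_le_square)
    also have "\<dots> \<le> (\<Sum>k<r. (b k)\<^sup>2) * g s"
      unfolding closed[OF that] g_def by (rule Cauchy_Schwarz_ineq_sum)
    finally show ?thesis using c unfolding g'_def by (simp add: divide_right_mono)
  qed
  have "0 \<le> g s" for s unfolding g_def by (simp add: sum_nonneg)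
  moreover have "g 0 = 0" unfolding g_def by (simp add: init)
  ultimately have "g t = 0" using gronwall_vanishing[OF g_deriv g_bound _ _ t] by blast
  then have "\<forall>k<r. y k t = 0"
    unfolding g_def by (subst (asm) sum_nonneg_eq_0_iff) auto
  then show ?thesis using closed[OF t] by (cases r) auto
qed

lemma exists_in_span_of_predecessors:
  fixes a :: "nat \<Rightarrow> 'a :: field vec"
  assumes a: "\<And>k. k \<le> d \<Longrightarrow> a k \<in> carrier_vec d"
  shows "\<exists>r\<le>d. \<exists>b. \<forall>i<d. a r $ i = (\<Sum>k<r. b k * a k $ i)"
proof -
  define Q where "Q = mat\<^sub>r (Suc d) (Suc d)
    (\<lambda>i. if i = d then 0\<^sub>v (Suc d) else vec (Suc d) (\<lambda>k. a k $ i))"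
  have Q: "Q \<in> carrier_mat (Suc d) (Suc d)" unfolding Q_def by simp
  have "det Q = 0" unfolding Q_def by (rule det_row_0) auto
  then obtain v where v: "v \<in> carrier_vec (Suc d)" "v \<noteq> 0\<^sub>v (Suc d)" "Q *\<^sub>v v = 0\<^sub>v (Suc d)"
    using det_0_iff_vec_prod_zero[OF Q] by auto
  have relation: "(\<Sum>k\<le>d. v $ k * a k $ i) = 0" if "i < d" for i
  proof -
    have "(Q *\<^sub>v v) $ i = 0" using v(3) that by simp
    then show ?thesis
      using that v(1) by (simp add: Q_def scalar_prod_def atLeast0LessThan lessThan_Suc_atMost mult.commute)
  qed
  define S where "S = {k. k \<le> d \<and> v $ k \<noteq> 0}"
  have "S \<noteq> {}" using v(1,2) unfolding S_def by (auto simp: vec_eq_iff less_Suc_eq_le)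
  moreover have "finite S" unfolding S_def by simp
  ultimately have "Max S \<in> S" and Max_above: "\<And>k. k \<in> S \<Longrightarrow> k \<le> Max S" by simp_all
  define r where "r = Max S"
  have r: "r \<le> d" "v $ r \<noteq> 0" using \<open>Max S \<in> S\<close> unfolding r_def S_def by auto
  have above_zero: "v $ k = 0" if "k \<le> d" "r < k" for k
  proof (rule ccontr)
    assume "v $ k \<noteq> 0"
    then have "k \<le> r" using Max_above[of k] \<open>k \<le> d\<close> unfolding r_def S_def by blast
    then show False using \<open>r < k\<close> by simp
  qed
  define b where "b k = - v $ k / v $ r" for k
  have "\<forall>i<d. a r $ i = (\<Sum>k<r. b k * a k $ i)"
  proof (intro allI impI)
    fix i assume "i < d"
    have "(\<Sum>k\<le>d. v $ k * a k $ i) = (\<Sum>k\<le>r. v $ k * a k $ i)"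
      by (rule sum.mono_neutral_right) (use r above_zero in auto)
    then have "(\<Sum>k<r. v $ k * a k $ i) + v $ r * a r $ i = 0"
      using relation[OF \<open>i < d\<close>] by (simp add: lessThan_Suc_atMost[symmetric])
    then have "v $ r * a r $ i = - (\<Sum>k<r. v $ k * a k $ i)"
      by (simp add: eq_neg_iff_add_eq_0 add.commute)
    then have "a r $ i = - (\<Sum>k<r. v $ k * a k $ i) / v $ r"
      using r(2) by (metis nonzero_mult_div_cancel_left)
    then show "a r $ i = (\<Sum>k<r. b k * a k $ i)"
      by (simp add: b_def sum_divide_distrib sum_negf[symmetric])
  qed
  with r(1) show ?thesis by blast
qed

lemma scalar_prod_ctrb_left_null_dynamics:
  assumes A: "A \<in> carrier_mat d d" and D: "D \<in> carrier_mat d q" and "c \<noteq> 0"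
    and w: "w \<in> carrier_vec d" and null: "ctrb_left_null (1\<^sub>m d + c \<cdot>\<^sub>m A) D w"
    and "k \<le> d" and v: "v \<in> carrier_vec d" and u: "u \<in> carrier_vec q"
  defines "a \<equiv> \<lambda>j. mat_pow_vec (transpose_mat (1\<^sub>m d + c \<cdot>\<^sub>m A)) j w"
  shows "a k \<bullet> (A *\<^sub>v v + D *\<^sub>v u) = (a (Suc k) \<bullet> v - a k \<bullet> v) / c"
proof -
  let ?Phi = "1\<^sub>m d + c \<cdot>\<^sub>m A"
  have Phi: "?Phi \<in> carrier_mat d d" using A by simp
  have ak: "a k \<in> carrier_vec d" using Phi w by (simp add: a_def)
  have Av: "A *\<^sub>v v \<in> carrier_vec d" using A v by simp
  have Du: "D *\<^sub>v u \<in> carrier_vec d" using D u by simp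
  have "?Phi *\<^sub>v v = 1\<^sub>m d *\<^sub>v v + (c \<cdot>\<^sub>m A) *\<^sub>v v"
    by (rule add_mult_distrib_mat_vec[of _ d d]) (use A v in auto)
  also have "\<dots> = v + c \<cdot>\<^sub>v (A *\<^sub>v v)"
    using A v by (simp add: smult_mult_mat_vec)
  finally have "a (Suc k) \<bullet> v = a k \<bullet> (v + c \<cdot>\<^sub>v (A *\<^sub>v v))"
    using transpose_vec_mult_scalar[OF Phi v ak] by (simp add: a_def mat_pow_vec_Suc)
  also have "\<dots> = a k \<bullet> v + c * (a k \<bullet> (A *\<^sub>v v))"
    using ak v Av by (simp add: scalar_prod_add_distrib[OF ak v])
  finally have "c * (a k \<bullet> (A *\<^sub>v v)) = a (Suc k) \<bullet> v - a k \<bullet> v"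
    by simp
  then have "a k \<bullet> (A *\<^sub>v v) = (a (Suc k) \<bullet> v - a k \<bullet> v) / c"
    using \<open>c \<noteq> 0\<close> by (simp add: eq_divide_eq mult.commute)
  moreover have "a k \<bullet> (D *\<^sub>v u) = 0"
  proof -
    have "transpose_mat D *\<^sub>v a k = 0\<^sub>v q"
      using null \<open>k \<le> d\<close> A D unfolding ctrb_left_null_def a_def by simp
    then show ?thesis using transpose_vec_mult_scalar[OF D u ak] u by simp
  qed
  ultimately show ?thesis by (simp add: scalar_prod_add_distrib[OF ak Av Du])
qed

lemma ctrb_left_null_orthogonal_to_trajectory:
  assumes A: "A \<in> carrier_mat d d" and D: "D \<in> carrier_mat d q" and c: "c > 0"
    and w: "w \<in> carrier_vec d" and null: "ctrb_left_null (1\<^sub>m d + c \<cdot>\<^sub>m A) D w"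
    and x: "\<And>t. t \<in> {0..T} \<Longrightarrow> x t \<in> carrier_vec d"
    and u: "\<And>t. t \<in> {0..T} \<Longrightarrow> u t \<in> carrier_vec q"
    and x_deriv: "\<And>t i. t \<in> {0..T} \<Longrightarrow> i < d \<Longrightarrow>
      ((\<lambda>s. x s $ i) has_real_derivative (A *\<^sub>v x t + D *\<^sub>v u t) $ i) (at t within {0..T})"
    and "x 0 = 0\<^sub>v d" and t: "t \<in> {0..T}"
  shows "w \<bullet> x t = 0"
proof -
  define a where "a k = mat_pow_vec (transpose_mat (1\<^sub>m d + c \<cdot>\<^sub>m A)) k w" for k
  define y where "y k s = (\<Sum>i\<in>{0..<d}. a k $ i * x s $ i)" for k s
  have a: "a k \<in> carrier_vec d" for k using A w by (simp add: a_def)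
  have y_scalar_prod: "y k s = a k \<bullet> x s" if "s \<in> {0..T}" for k s
    using carrier_vecD[OF x[OF that]] unfolding y_def scalar_prod_def by simp
  have y_deriv: "(y k has_real_derivative (y (Suc k) s - y k s) / c) (at s within {0..T})"
    if "k \<le> d" "s \<in> {0..T}" for k s
  proof -
    have "(y k has_real_derivative (\<Sum>i\<in>{0..<d}. a k $ i * (A *\<^sub>v x s + D *\<^sub>v u s) $ i))
        (at s within {0..T})"
      unfolding y_def[abs_def] using x_deriv that(2) by (intro DERIV_sum DERIV_cmult) auto
    moreover have "(\<Sum>i\<in>{0..<d}. a k $ i * (A *\<^sub>v x s + D *\<^sub>v u s) $ i) =
        a k \<bullet> (A *\<^sub>v x s + D *\<^sub>v u s)"
      using D unfolding scalar_prod_def by simp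
    moreover have "a k \<bullet> (A *\<^sub>v x s + D *\<^sub>v u s) = (a (Suc k) \<bullet> x s - a k \<bullet> x s) / c"
      using scalar_prod_ctrb_left_null_dynamics[OF A D _ w null that(1) x[OF that(2)] u[OF that(2)]] c
      by (simp add: a_def)
    ultimately show ?thesis using y_scalar_prod[OF that(2)] by simp
  qed
  obtain r b where "r \<le> d" and a_r: "\<And>i. i < d \<Longrightarrow> a r $ i = (\<Sum>k<r. b k * a k $ i)"
    using exists_in_span_of_predecessors[of d a] a by blast
  have y_r: "y r s = (\<Sum>k<r. b k * y k s)" for s
  proof -
    have "y r s = (\<Sum>i\<in>{0..<d}. \<Sum>k<r. b k * (a k $ i * x s $ i))"
      unfolding y_def by (simp add: a_r sum_distrib_right mult.assoc)
    also have "\<dots> = (\<Sum>k<r. \<Sum>i\<in>{0..<d}. b k * (a k $ i * x s $ i))"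
      by (rule sum.swap)
    also have "\<dots> = (\<Sum>k<r. b k * y k s)"
      by (simp add: y_def sum_distrib_left)
    finally show ?thesis .
  qed
  have "y 0 t = 0"
  proof (rule shift_ode_vanishes[where y = y and r = r and b = b and T = T and t = t, OF c])
    show "(y k has_real_derivative (y (Suc k) s - y k s) / c) (at s within {0..T})"
      if "k < r" "s \<in> {0..T}" for k s
      using y_deriv that \<open>r \<le> d\<close> by simp
    show "y k 0 = 0" if "k < r" for k
      using \<open>x 0 = 0\<^sub>v d\<close> by (simp add: y_def)
  qed (use y_r t in auto)
  then show ?thesis using y_scalar_prod[OF t, of 0] by (simp add: a_def)
qed

lemma ctrb_left_null_trivial_if_ct_controllable:
  assumes A: "A \<in> carrier_mat d d" and D: "D \<in> carrier_mat d q" and c: "c > 0"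
    and ct: "ct_controllable A D"
    and w: "w \<in> carrier_vec d" and null: "ctrb_left_null (1\<^sub>m d + c \<cdot>\<^sub>m A) D w"
  shows "w = 0\<^sub>v d"
proof -
  have dims: "dim_row A = d" "dim_col D = q" using A D by auto
  have "dim_vec (0\<^sub>v d :: real vec) = dim_row A \<and> dim_vec w = dim_row A" using A w by simp
  with ct obtain T u x where "T > 0"
    and ux: "\<forall>t\<in>{0..T}. dim_vec (u t) = dim_col D \<and> dim_vec (x t) = dim_row A"
    and "x 0 = 0\<^sub>v d" and "x T = w"
    and x_deriv: "\<forall>t\<in>{0..T}. \<forall>i<dim_row A.
      ((\<lambda>s. x s $ i) has_real_derivative (A *\<^sub>v x t + D *\<^sub>v u t) $ i) (at t within {0..T})"
    unfolding ct_controllable_def by blast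
  have "w \<bullet> x T = 0"
  proof (rule ctrb_left_null_orthogonal_to_trajectory[OF A D c w null])
    show "x t \<in> carrier_vec d" and "u t \<in> carrier_vec q" if "t \<in> {0..T}" for t
      using ux that dims by (auto intro: carrier_vecI)
  qed (use x_deriv dims \<open>x 0 = 0\<^sub>v d\<close> \<open>T > 0\<close> in auto)
  then show ?thesis using scalar_prod_self_eq_zero[OF w] \<open>x T = w\<close> by simp
qed

lemma dt_controllable_sampled:
  assumes A: "A \<in> carrier_mat d d" and D: "D \<in> carrier_mat d q" and c: "c > 0"
    and ct: "ct_controllable A D"
  shows "dt_controllable (1\<^sub>m d + c \<cdot>\<^sub>m A) (c \<cdot>\<^sub>m D)"
proof -
  have Phi: "1\<^sub>m d + c \<cdot>\<^sub>m A \<in> carrier_mat d d" and Psi: "c \<cdot>\<^sub>m D \<in> carrier_mat d q"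
    using A D by simp_all
  show ?thesis
  proof (rule dt_controllable_if_ctrb_left_null_trivial[OF Phi Psi])
    fix w
    assume "w \<in> carrier_vec d" and "ctrb_left_null (1\<^sub>m d + c \<cdot>\<^sub>m A) (c \<cdot>\<^sub>m D) w"
    then show "w = 0\<^sub>v d"
      using ctrb_left_null_trivial_if_ct_controllable[OF A D c ct] ctrb_left_null_smult[OF Phi D] c
      by simp
  qed
qed

theorem corollary11:
  fixes N n m p :: nat and B C H W :: "real mat" and \<delta> :: "nat \<Rightarrow> real" and h :: real
  assumes "N > 0" "n > 0" "m > 0" "p > 0"
    and "B \<in> carrier_mat n p" "C \<in> carrier_mat m n" "H \<in> carrier_mat n m"
    and "W \<in> carrier_mat N N" "\<forall>i<N. W $$ (i, i) = 0"
    and "\<forall>i<N. \<delta> i \<in> {0, 1}"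
    and "h > 0"
    and "ct_controllable (1\<^sub>m (N * n) + kron W (H * C)) (kron (mat_diag N \<delta>) B)"
  shows "dt_controllable
           (exp h \<cdot>\<^sub>m 1\<^sub>m (N * n) + (exp h - 1) \<cdot>\<^sub>m kron W (H * C))
           ((exp h - 1) \<cdot>\<^sub>m kron (mat_diag N \<delta>) B)"
proof -
  define M where "M = kron W (H * C)"
  define D where "D = kron (mat_diag N \<delta>) B"
  have M: "M \<in> carrier_mat (N * n) (N * n)"
    using kron_carrier_mat[of W "H * C"] assms(6-8) by (simp add: M_def)
  have D: "D \<in> carrier_mat (N * n) (N * p)"
    using kron_carrier_mat[of "mat_diag N \<delta>" B] mat_diag_dim[of N \<delta>] assms(5) by (simp add: D_def)
  have "exp h \<cdot>\<^sub>m 1\<^sub>m (N * n) + (exp h - 1) \<cdot>\<^sub>m M = 1\<^sub>m (N * n) + (exp h - 1) \<cdot>\<^sub>m (1\<^sub>m (N * n) + M)"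
    using M by (intro eq_matI) (auto simp: algebra_simps)
  moreover have "dt_controllable (1\<^sub>m (N * n) + (exp h - 1) \<cdot>\<^sub>m (1\<^sub>m (N * n) + M)) ((exp h - 1) \<cdot>\<^sub>m D)"
    using M D \<open>h > 0\<close> assms(12) by (intro dt_controllable_sampled) (simp_all add: M_def D_def)
  ultimately show ?thesis by (simp add: M_def D_def)
qed

end
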